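(* Let $G$ be an $H(4,3)$-free graph and $u^*\in V(G)$. Put $N=N(u^* )$, $W=V(G)\setminus N[u^*]$, and $A^{+}=\{v\in N: v \text{ has at least one neighbor in } N\}$. Assume that the induced subgraph $G[A^{+}]$ is isomorphic to $K_4$. Let \[ U:=\{w\in W: w \text{ has exactly one neighbor in } A^{+}\}. \] Then $U$ is an independent set in $G$ (equivalently, in $G[W]$).
   Context: $H(4,3)$ is the graph obtained from a $4$-cycle and a triangle by identifying one vertex of the $4$-cycle with one vertex of the triangle; $H(4,3)$-free means containing no subgraph (not necessarily induced) isomorphic to $H(4,3)$. $N(u^* )$ is the open neighborhood of $u^*$ and $N[u^*]=N(u^* )\cup\{u^*\}$. *)

theory Defs
  imports Main
begin

definition simple_graph :: "'a set \<Rightarrow> ('a \<Rightarrow> 'a \<Rightarrow> bool) \<Rightarrow> bool" where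
  "simple_graph V E \<longleftrightarrow> finite V \<and> (\<forall>x y. E x y \<longrightarrow> E y x) \<and> (\<forall>x. \<not> E x x)
     \<and> (\<forall>x y. E x y \<longrightarrow> x \<in> V \<and> y \<in> V)"

definition nbhd :: "'a set \<Rightarrow> ('a \<Rightarrow> 'a \<Rightarrow> bool) \<Rightarrow> 'a \<Rightarrow> 'a set" where
  "nbhd V E u = {v \<in> V. E u v}"

definition closed_nbhd :: "'a set \<Rightarrow> ('a \<Rightarrow> 'a \<Rightarrow> bool) \<Rightarrow> 'a \<Rightarrow> 'a set" where
  "closed_nbhd V E u = insert u (nbhd V E u)"

text \<open>G contains a (not necessarily induced) subgraph isomorphic to H(4,3):
a 4-cycle a-b-c-d-a and a triangle a-e-f sharing exactly the vertex a
(six distinct vertices).\<close>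
definition contains_H43 :: "'a set \<Rightarrow> ('a \<Rightarrow> 'a \<Rightarrow> bool) \<Rightarrow> bool" where
  "contains_H43 V E \<longleftrightarrow> (\<exists>a b c d e f.
      {a,b,c,d,e,f} \<subseteq> V \<and> distinct [a,b,c,d,e,f] \<and>
      E a b \<and> E b c \<and> E c d \<and> E d a \<and> E a e \<and> E e f \<and> E f a)"

definition H43_free :: "'a set \<Rightarrow> ('a \<Rightarrow> 'a \<Rightarrow> bool) \<Rightarrow> bool" where
  "H43_free V E \<longleftrightarrow> \<not> contains_H43 V E"

definition induced_K4 :: "('a \<Rightarrow> 'a \<Rightarrow> bool) \<Rightarrow> 'a set \<Rightarrow> bool" where
  "induced_K4 E S \<longleftrightarrow> card S = 4 \<and> (\<forall>x\<in>S. \<forall>y\<in>S. x \<noteq> y \<longrightarrow> E x y)"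

definition independent_set :: "('a \<Rightarrow> 'a \<Rightarrow> bool) \<Rightarrow> 'a set \<Rightarrow> bool" where
  "independent_set E S \<longleftrightarrow> (\<forall>x\<in>S. \<forall>y\<in>S. \<not> E x y)"

end

theory Submission
  imports Defs
begin

text \<open>
Let \<open>w\<^sub>1 w\<^sub>2\<close> be an edge of \<open>G - N[u\<^sup>*]\<close> whose ends have neighbours \<open>a\<close> and \<open>b\<close> in the
clique \<open>A\<^sup>+\<close>. If \<open>a = b\<close>, pick two further clique vertices \<open>c, d\<close>: the triangle \<open>a w\<^sub>1 w\<^sub>2\<close>
and the 4-cycle \<open>a c u\<^sup>* d\<close> form an \<open>H(4,3)\<close>. If \<open>a \<noteq> b\<close>, let \<open>c, d\<close> be the other two clique
vertices: the 4-cycle \<open>a w\<^sub>1 w\<^sub>2 b\<close> and the triangle \<open>a c d\<close> form an \<open>H(4,3)\<close>. So only the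
existence of a neighbour in \<open>A\<^sup>+\<close> is used, not its uniqueness.
\<close>

lemma contains_H43I:
  assumes "{a, b, c, d, e, f} \<subseteq> V" "distinct [a, b, c, d, e, f]"
    and "E a b" "E b c" "E c d" "E d a" "E a e" "E e f" "E f a"
  shows "contains_H43 V E"
  using assms unfolding contains_H43_def by blast

lemma card_4_obtain_two_others:
  assumes "card S = 4" "a \<in> S" "b \<in> S"
  obtains c d where "c \<in> S - {a, b}" "d \<in> S - {a, b}" "c \<noteq> d"
proof -
  have "card S - card {a, b} \<le> card (S - {a, b})"
    by (rule diff_card_le_card_Diff) simp
  moreover have "card {a, b} \<le> 2"
    by (simp add: card_insert_le_m1)
  ultimately have "2 \<le> card (S - {a, b})"
    using assms(1) by linarith
  then obtain T where "T \<subseteq> S - {a, b}" "card T = 2"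
    by (meson obtain_subset_with_card_n)
  then show ?thesis
    using that by (auto simp: card_2_iff)
qed

lemma edge_attached_to_K4_in_nbhd_contains_H43:
  assumes G: "simple_graph V E" and "u \<in> V"
    and K: "induced_K4 E K" "K \<subseteq> nbhd V E u"
    and w: "w\<^sub>1 \<in> V - closed_nbhd V E u" "w\<^sub>2 \<in> V - closed_nbhd V E u" "E w\<^sub>1 w\<^sub>2"
    and a: "a \<in> K" "E w\<^sub>1 a" and b: "b \<in> K" "E w\<^sub>2 b"
  shows "contains_H43 V E"
proof -
  have sym: "E x y \<Longrightarrow> E y x" and irrefl: "\<not> E x x" for x y
    using G unfolding simple_graph_def by blast+
  have clique: "E x y" if "x \<in> K" "y \<in> K" "x \<noteq> y" for x y
    using K(1) that unfolding induced_K4_def by blast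
  have K_adj_u: "x \<in> V \<and> E u x" if "x \<in> K" for x
    using K(2) that unfolding nbhd_def by blast
  have u_notin_K: "u \<notin> K"
    using K_adj_u irrefl by blast
  have w_notin: "w\<^sub>1 \<notin> insert u K" "w\<^sub>2 \<notin> insert u K" "w\<^sub>1 \<noteq> w\<^sub>2" "w\<^sub>1 \<in> V" "w\<^sub>2 \<in> V"
    using w K_adj_u irrefl unfolding closed_nbhd_def nbhd_def by blast+
  obtain c d where cd: "c \<in> K - {a, b}" "d \<in> K - {a, b}" "c \<noteq> d"
    using card_4_obtain_two_others K(1) a(1) b(1) unfolding induced_K4_def by metis
  show ?thesis
  proof (cases "a = b")
    case True
    show ?thesis
    proof (rule contains_H43I[of a c u d w\<^sub>1 w\<^sub>2])
      show "{a, c, u, d, w\<^sub>1, w\<^sub>2} \<subseteq> V" "distinct [a, c, u, d, w\<^sub>1, w\<^sub>2]"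
        using a b cd w_notin u_notin_K K_adj_u \<open>u \<in> V\<close> by auto
    qed (use True a b cd w clique K_adj_u sym in auto)
  next
    case False
    show ?thesis
    proof (rule contains_H43I[of a w\<^sub>1 w\<^sub>2 b c d])
      show "{a, w\<^sub>1, w\<^sub>2, b, c, d} \<subseteq> V" "distinct [a, w\<^sub>1, w\<^sub>2, b, c, d]"
        using False a b cd w_notin K_adj_u by auto
    qed (use False a b cd w clique sym in auto)
  qed
qed

theorem lemma4p2:
  fixes V :: "'a set" and E :: "'a \<Rightarrow> 'a \<Rightarrow> bool" and u :: 'a
  assumes "simple_graph V E"
    and "H43_free V E"
    and "u \<in> V"
    and "induced_K4 E {v \<in> nbhd V E u. \<exists>x \<in> nbhd V E u. E v x}"
  shows "independent_set E
           {w \<in> V - closed_nbhd V E u.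
              card {a \<in> {v \<in> nbhd V E u. \<exists>x \<in> nbhd V E u. E v x}. E w a} = 1}"
proof -
  define A where "A = {v \<in> nbhd V E u. \<exists>x \<in> nbhd V E u. E v x}"
  have "\<not> E w\<^sub>1 w\<^sub>2"
    if w: "w\<^sub>1 \<in> V - closed_nbhd V E u" "w\<^sub>2 \<in> V - closed_nbhd V E u"
      and one_nbr: "card {a \<in> A. E w\<^sub>1 a} = 1" "card {a \<in> A. E w\<^sub>2 a} = 1" for w\<^sub>1 w\<^sub>2
  proof
    assume "E w\<^sub>1 w\<^sub>2"
    obtain a b where "a \<in> A" "E w\<^sub>1 a" "b \<in> A" "E w\<^sub>2 b"
      using one_nbr by (auto simp: card_1_singleton_iff)
    then have "contains_H43 V E"
      using edge_attached_to_K4_in_nbhd_contains_H43[of V E u A w\<^sub>1 w\<^sub>2 a b]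
        assms(1,3,4) w \<open>E w\<^sub>1 w\<^sub>2\<close> unfolding A_def by blast
    then show False
      using assms(2) unfolding H43_free_def by blast
  qed
  then show ?thesis
    unfolding independent_set_def A_def by blast
qed

end
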